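(* Let $\mathcal{C}$ be a category, $J$ a directed partially ordered set, and let $\boldsymbol{X}=(X_\lambda,p_{\lambda\lambda'},\Lambda)$ and $\boldsymbol{Y}=(Y_\mu,q_{\mu\mu'},M)$ be inverse systems in $\mathcal{C}$ with $M$ cofinite. Then every morphism $\boldsymbol{f}=[(f,f^j_\mu)]:\boldsymbol{X}\to\boldsymbol{Y}$ of $pro^J$-$\mathcal{C}$ admits a simple representative $(f',f'^j_\mu):\boldsymbol{X}\to\boldsymbol{Y}$.
   Context: An inverse system $\boldsymbol{X}=(X_\lambda,p_{\lambda\lambda'},\Lambda)$ in $\mathcal{C}$: $\Lambda$ directed preordered, morphisms $p_{\lambda\lambda'}:X_{\lambda'}\to X_\lambda$ for $\lambda\le\lambda'$, $p_{\lambda\lambda}=1$, $p_{\lambda\lambda'}p_{\lambda'\lambda''}=p_{\lambda\lambda''}$. A directed set is cofinite if each element has finitely many predecessors. A $J$-morphism $(f,f^j_\mu):\boldsymbol{X}\to\boldsymbol{Y}$: $f:M\to\Lambda$ and $\mathcal{C}$-morphisms $f^j_\mu:X_{f(\mu)}\to Y_\mu$ ($\mu\in M$, $j\in J$) such that for all $\mu\le\mu'$ there exist $\lambda\ge f(\mu),f(\mu')$ and $j_0$ with $f^{j'}_\mu p_{f(\mu)\lambda}=q_{\mu\mu'}f^{j'}_{\mu'}p_{f(\mu')\lambda}$ for all $j'\ge j_0$. It is simple if $f$ is increasing and for every $\mu\le\mu'$ one may take $\lambda=f(\mu')$. $(f,f^j_\mu)\sim(f',f'^j_\mu)$ iff for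 every $\mu$ there exist $\lambda\ge f(\mu),f'(\mu)$ and $j_0$ with $f^{j'}_\mu p_{f(\mu)\lambda}=f'^{j'}_\mu p_{f'(\mu)\lambda}$ for all $j'\ge j_0$. $pro^J$-$\mathcal{C}$ is the category of inverse systems and $\sim$-classes of $J$-morphisms, composition $(g,g^j_\nu)(f,f^j_\mu)=(fg,g^j_\nu f^j_{g(\nu)})$. *)

theory Defs
  imports Main
begin

(* A category given by objects Ob, hom-sets Hom a b (morphisms a -> b),
   composition cmp g f  (= g o f, first f then g) and identities idm. *)
definition category ::
  "'o set \<Rightarrow> ('o \<Rightarrow> 'o \<Rightarrow> 'm set) \<Rightarrow> ('m \<Rightarrow> 'm \<Rightarrow> 'm) \<Rightarrow> ('o \<Rightarrow> 'm) \<Rightarrow> bool" where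
  "category Ob Hom cmp idm \<longleftrightarrow>
     (\<forall>a\<in>Ob. idm a \<in> Hom a a) \<and>
     (\<forall>a\<in>Ob. \<forall>b\<in>Ob. \<forall>c\<in>Ob. \<forall>f\<in>Hom a b. \<forall>g\<in>Hom b c. cmp g f \<in> Hom a c) \<and>
     (\<forall>a\<in>Ob. \<forall>b\<in>Ob. \<forall>c\<in>Ob. \<forall>d\<in>Ob. \<forall>f\<in>Hom a b. \<forall>g\<in>Hom b c. \<forall>h\<in>Hom c d.
        cmp h (cmp g f) = cmp (cmp h g) f) \<and>
     (\<forall>a\<in>Ob. \<forall>b\<in>Ob. \<forall>f\<in>Hom a b. cmp f (idm a) = f \<and> cmp (idm b) f = f)"

definition directed_preorder :: "'i set \<Rightarrow> ('i \<Rightarrow> 'i \<Rightarrow> bool) \<Rightarrow> bool" where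
  "directed_preorder I le \<longleftrightarrow>
     (\<forall>i\<in>I. le i i) \<and>
     (\<forall>i\<in>I. \<forall>j\<in>I. \<forall>k\<in>I. le i j \<longrightarrow> le j k \<longrightarrow> le i k) \<and>
     (\<forall>i\<in>I. \<forall>j\<in>I. \<exists>k\<in>I. le i k \<and> le j k)"

definition directed_poset :: "'i set \<Rightarrow> ('i \<Rightarrow> 'i \<Rightarrow> bool) \<Rightarrow> bool" where
  "directed_poset I le \<longleftrightarrow> directed_preorder I le \<and>
     (\<forall>i\<in>I. \<forall>j\<in>I. le i j \<longrightarrow> le j i \<longrightarrow> i = j)"

definition cofinite_set :: "'i set \<Rightarrow> ('i \<Rightarrow> 'i \<Rightarrow> bool) \<Rightarrow> bool" where
  "cofinite_set I le \<longleftrightarrow> (\<forall>i\<in>I. finite {k\<in>I. le k i})"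

definition inverse_system ::
  "'o set \<Rightarrow> ('o \<Rightarrow> 'o \<Rightarrow> 'm set) \<Rightarrow> ('m \<Rightarrow> 'm \<Rightarrow> 'm) \<Rightarrow> ('o \<Rightarrow> 'm) \<Rightarrow>
   'l set \<Rightarrow> ('l \<Rightarrow> 'l \<Rightarrow> bool) \<Rightarrow> ('l \<Rightarrow> 'o) \<Rightarrow> ('l \<Rightarrow> 'l \<Rightarrow> 'm) \<Rightarrow> bool" where
  "inverse_system Ob Hom cmp idm L le X p \<longleftrightarrow>
     directed_preorder L le \<and>
     (\<forall>l\<in>L. X l \<in> Ob) \<and>
     (\<forall>l\<in>L. \<forall>l'\<in>L. le l l' \<longrightarrow> p l l' \<in> Hom (X l') (X l)) \<and>
     (\<forall>l\<in>L. p l l = idm (X l)) \<and>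
     (\<forall>l\<in>L. \<forall>l'\<in>L. \<forall>l''\<in>L. le l l' \<longrightarrow> le l' l'' \<longrightarrow> cmp (p l l') (p l' l'') = p l l'')"

definition J_morphism ::
  "'o set \<Rightarrow> ('o \<Rightarrow> 'o \<Rightarrow> 'm set) \<Rightarrow> ('m \<Rightarrow> 'm \<Rightarrow> 'm) \<Rightarrow>
   'j set \<Rightarrow> ('j \<Rightarrow> 'j \<Rightarrow> bool) \<Rightarrow>
   'l set \<Rightarrow> ('l \<Rightarrow> 'l \<Rightarrow> bool) \<Rightarrow> ('l \<Rightarrow> 'o) \<Rightarrow> ('l \<Rightarrow> 'l \<Rightarrow> 'm) \<Rightarrow>
   'u set \<Rightarrow> ('u \<Rightarrow> 'u \<Rightarrow> bool) \<Rightarrow> ('u \<Rightarrow> 'o) \<Rightarrow> ('u \<Rightarrow> 'u \<Rightarrow> 'm) \<Rightarrow>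
   ('u \<Rightarrow> 'l) \<Rightarrow> ('j \<Rightarrow> 'u \<Rightarrow> 'm) \<Rightarrow> bool" where
  "J_morphism Ob Hom cmp J leJ L leL X p M leM Y q f fj \<longleftrightarrow>
     (\<forall>u\<in>M. f u \<in> L) \<and>
     (\<forall>u\<in>M. \<forall>j\<in>J. fj j u \<in> Hom (X (f u)) (Y u)) \<and>
     (\<forall>u\<in>M. \<forall>u'\<in>M. leM u u' \<longrightarrow>
        (\<exists>l\<in>L. leL (f u) l \<and> leL (f u') l \<and>
          (\<exists>j0\<in>J. \<forall>j'\<in>J. leJ j0 j' \<longrightarrow>
             cmp (fj j' u) (p (f u) l) = cmp (q u u') (cmp (fj j' u') (p (f u') l)))))"

definition simple_J_morphism ::
  "'o set \<Rightarrow> ('o \<Rightarrow> 'o \<Rightarrow> 'm set) \<Rightarrow> ('m \<Rightarrow> 'm \<Rightarrow> 'm) \<Rightarrow>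
   'j set \<Rightarrow> ('j \<Rightarrow> 'j \<Rightarrow> bool) \<Rightarrow>
   'l set \<Rightarrow> ('l \<Rightarrow> 'l \<Rightarrow> bool) \<Rightarrow> ('l \<Rightarrow> 'o) \<Rightarrow> ('l \<Rightarrow> 'l \<Rightarrow> 'm) \<Rightarrow>
   'u set \<Rightarrow> ('u \<Rightarrow> 'u \<Rightarrow> bool) \<Rightarrow> ('u \<Rightarrow> 'o) \<Rightarrow> ('u \<Rightarrow> 'u \<Rightarrow> 'm) \<Rightarrow>
   ('u \<Rightarrow> 'l) \<Rightarrow> ('j \<Rightarrow> 'u \<Rightarrow> 'm) \<Rightarrow> bool" where
  "simple_J_morphism Ob Hom cmp J leJ L leL X p M leM Y q f fj \<longleftrightarrow>
     J_morphism Ob Hom cmp J leJ L leL X p M leM Y q f fj \<and>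
     (\<forall>u\<in>M. \<forall>u'\<in>M. leM u u' \<longrightarrow> leL (f u) (f u')) \<and>
     (\<forall>u\<in>M. \<forall>u'\<in>M. leM u u' \<longrightarrow>
          (\<exists>j0\<in>J. \<forall>j'\<in>J. leJ j0 j' \<longrightarrow>
             cmp (fj j' u) (p (f u) (f u')) = cmp (q u u') (cmp (fj j' u') (p (f u') (f u')))))"

definition J_equiv ::
  "('m \<Rightarrow> 'm \<Rightarrow> 'm) \<Rightarrow> 'j set \<Rightarrow> ('j \<Rightarrow> 'j \<Rightarrow> bool) \<Rightarrow>
   'l set \<Rightarrow> ('l \<Rightarrow> 'l \<Rightarrow> bool) \<Rightarrow> ('l \<Rightarrow> 'l \<Rightarrow> 'm) \<Rightarrow> 'u set \<Rightarrow>
   ('u \<Rightarrow> 'l) \<Rightarrow> ('j \<Rightarrow> 'u \<Rightarrow> 'm) \<Rightarrow> ('u \<Rightarrow> 'l) \<Rightarrow> ('j \<Rightarrow> 'u \<Rightarrow> 'm) \<Rightarrow> bool" where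
  "J_equiv cmp J leJ L leL p M f fj g gj \<longleftrightarrow>
     (\<forall>u\<in>M. \<exists>l\<in>L. leL (f u) l \<and> leL (g u) l \<and>
        (\<exists>j0\<in>J. \<forall>j'\<in>J. leJ j0 j' \<longrightarrow> cmp (fj j' u) (p (f u) l) = cmp (gj j' u) (p (g u) l)))"

end

(*
  Choose for every u <= u' in M an index w(u, u') in Lambda at which the square of the
  J-morphism commutes eventually in J.  Since every u has only finitely many predecessors,
  recursion along the strict predecessors yields an increasing F : M -> Lambda with F(u)
  above f(u) and above w(k, u) for all k <= u.  Pushing each square up from w(u, u') to
  F(u') along the bonding maps shows that f'^j_u = f^j_u p_{f(u) F(u)} is simple, and
  with lambda = F(u) it is equivalent to (f, f^j_u).
*)
theory Submission
  imports Defs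
begin

lemma category_comp_hom:
  assumes "category Ob Hom cmp idm" "a \<in> Ob" "b \<in> Ob" "c \<in> Ob" "f \<in> Hom a b" "g \<in> Hom b c"
  shows "cmp g f \<in> Hom a c"
  using assms unfolding category_def by blast

lemma category_assoc:
  assumes "category Ob Hom cmp idm" "a \<in> Ob" "b \<in> Ob" "c \<in> Ob" "d \<in> Ob"
    and "f \<in> Hom a b" "g \<in> Hom b c" "h \<in> Hom c d"
  shows "cmp h (cmp g f) = cmp (cmp h g) f"
  using assms unfolding category_def by blast

lemma inverse_system_ob:
  assumes "inverse_system Ob Hom cmp idm L le X p" "l \<in> L"
  shows "X l \<in> Ob"
  using assms unfolding inverse_system_def by blast

lemma inverse_system_bond_hom:
  assumes "inverse_system Ob Hom cmp idm L le X p" "l \<in> L" "l' \<in> L" "le l l'"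
  shows "p l l' \<in> Hom (X l') (X l)"
  using assms unfolding inverse_system_def by blast

lemma inverse_system_bond_trans:
  assumes "inverse_system Ob Hom cmp idm L le X p" "l \<in> L" "l' \<in> L" "l'' \<in> L" "le l l'" "le l' l''"
  shows "cmp (p l l') (p l' l'') = p l l''"
  using assms unfolding inverse_system_def by blast

lemma inverse_system_directed:
  assumes "inverse_system Ob Hom cmp idm L le X p"
  shows "directed_preorder L le"
  using assms unfolding inverse_system_def by blast

lemma inverse_system_reflp_on:
  assumes "inverse_system Ob Hom cmp idm L le X p"
  shows "reflp_on L le"
  using assms unfolding inverse_system_def directed_preorder_def reflp_on_def by blast

lemma inverse_system_transp_on:
  assumes "inverse_system Ob Hom cmp idm L le X p"
  shows "transp_on L le"
  using assms unfolding inverse_system_def directed_preorder_def transp_on_def by blast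

lemma directed_preorder_finite_upper_bound:
  assumes dir: "directed_preorder L le" and "L \<noteq> {}" and "finite S" and "S \<subseteq> L"
  shows "\<exists>l\<in>L. \<forall>s\<in>S. le s l"
  using \<open>finite S\<close> \<open>S \<subseteq> L\<close>
proof (induction S rule: finite_induct)
  case empty
  then show ?case using \<open>L \<noteq> {}\<close> by blast
next
  case (insert x S)
  then obtain l where l: "l \<in> L" "\<forall>s\<in>S. le s l" by auto
  obtain k where k: "k \<in> L" "le x k" "le l k"
    using dir l(1) insert.prems unfolding directed_preorder_def by blast
  have "\<forall>s\<in>S. le s k"
    using dir l k insert.prems unfolding directed_preorder_def by blast
  then show ?case using k by blast
qed

lemma wf_strict_part_of_cofinite_preorder:
  assumes refl: "reflp_on M le" and trans: "transp_on M le" and cof: "cofinite_set M le"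
  shows "wf {(k, u). k \<in> M \<and> u \<in> M \<and> le k u \<and> \<not> le u k}"
proof (rule wf_subset)
  define D where "D u = {k \<in> M. le k u}" for u
  show "wf (inv_image less_than (\<lambda>u. card (D u)))" by simp
  show "{(k, u). k \<in> M \<and> u \<in> M \<and> le k u \<and> \<not> le u k}
      \<subseteq> inv_image less_than (\<lambda>u. card (D u))"
  proof clarsimp
    fix k u assume "k \<in> M" "u \<in> M" "le k u" "\<not> le u k"
    then have "D k \<subset> D u" using reflp_onD[OF refl] transp_onD[OF trans] unfolding D_def by blast
    moreover have "finite (D u)" using cof \<open>u \<in> M\<close> unfolding cofinite_set_def D_def by blast
    ultimately show "card (D k) < card (D u)" by (rule psubset_card_mono[rotated])
  qed
qed

lemma monotone_map_above_finite_sets: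
  assumes refl: "reflp_on M leM" and trans: "transp_on M leM" and cof: "cofinite_set M leM"
    and dirL: "directed_preorder L leL"
    and h: "\<And>u. u \<in> M \<Longrightarrow> finite (h u) \<and> h u \<noteq> {} \<and> h u \<subseteq> L"
  obtains F where "\<And>u. u \<in> M \<Longrightarrow> F u \<in> L"
    and "\<And>u l. u \<in> M \<Longrightarrow> l \<in> h u \<Longrightarrow> leL l (F u)"
    and "\<And>u u'. u \<in> M \<Longrightarrow> u' \<in> M \<Longrightarrow> leM u u' \<Longrightarrow> leL (F u) (F u')"
proof -
  define R where "R = {(k, u). k \<in> M \<and> u \<in> M \<and> leM k u \<and> \<not> leM u k}"
  define H where "H u = (\<Union>k\<in>{k \<in> M. leM k u}. h k)" for u
  define ub where "ub S = (SOME l. l \<in> L \<and> (\<forall>s\<in>S. leL s l))" for S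
  \<comment> \<open>Bounding F on the strict predecessors is what makes F increasing.\<close>
  define F where "F = wfrec R (\<lambda>F u. ub (H u \<union> F ` {k. (k, u) \<in> R}))"
  have wfR: "wf R"
    unfolding R_def using wf_strict_part_of_cofinite_preorder[OF refl trans cof] .
  have F_eq: "F u = ub (H u \<union> F ` {k. (k, u) \<in> R})" for u
  proof -
    have "cut F R u ` {k. (k, u) \<in> R} = F ` {k. (k, u) \<in> R}"
      by (rule image_cong) (simp_all add: cut_apply)
    then show ?thesis
      by (subst def_wfrec[OF F_def[THEN eq_reflection] wfR]) simp
  qed
  have F_bound: "F u \<in> L \<and> (\<forall>s \<in> H u \<union> F ` {k. (k, u) \<in> R}. leL s (F u))" if "u \<in> M" for u
    using wfR that
  proof (induction u rule: wf_induct_rule)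
    case (less u)
    let ?S = "H u \<union> F ` {k. (k, u) \<in> R}"
    have below: "finite {k \<in> M. leM k u}" using cof less.prems unfolding cofinite_set_def by blast
    have "finite ?S"
      using below h unfolding H_def by (auto intro: finite_subset[OF _ below] simp: R_def)
    moreover have "?S \<subseteq> L" using h less unfolding H_def R_def by fastforce
    moreover have "L \<noteq> {}" using h less.prems by blast
    ultimately have "\<exists>l. l \<in> L \<and> (\<forall>s\<in>?S. leL s l)"
      using directed_preorder_finite_upper_bound[OF dirL] by blast
    then show ?case unfolding F_eq[of u] ub_def by (rule someI_ex)
  qed
  \<comment> \<open>Needed because M is only preordered: u \<le> u' \<le> u does not force u = u'.\<close>
  have F_equivalent: "F u = F u'" if "u \<in> M" "u' \<in> M" "leM u u'" "leM u' u" for u u'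
  proof -
    have "H u = H u'" unfolding H_def using that transp_onD[OF trans] by blast
    moreover have "{k. (k, u) \<in> R} = {k. (k, u') \<in> R}"
      unfolding R_def using that transp_onD[OF trans] by blast
    ultimately show ?thesis using F_eq by metis
  qed
  show thesis
  proof
    fix u assume "u \<in> M"
    then show "F u \<in> L" using F_bound by blast
  next
    fix u l assume "u \<in> M" "l \<in> h u"
    then have "l \<in> H u" unfolding H_def using reflp_onD[OF refl] by blast
    then show "leL l (F u)" using F_bound \<open>u \<in> M\<close> by blast
  next
    fix u u' assume u: "u \<in> M" "u' \<in> M" "leM u u'"
    show "leL (F u) (F u')"
    proof (cases "leM u' u")
      case True
      then show ?thesis
        using F_equivalent[OF u True] F_bound u(2) dirL unfolding directed_preorder_def by metis
    next
      case False
      then have "(u, u') \<in> R" unfolding R_def using u by blast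
      then show ?thesis using F_bound u(2) by blast
    qed
  qed
qed

lemma inverse_system_comp_bond:
  assumes cat: "category Ob Hom cmp idm" and sys: "inverse_system Ob Hom cmp idm L le X p"
    and "l \<in> L" "l' \<in> L" "l'' \<in> L" "le l l'" "le l' l''"
    and "Z \<in> Ob" "a \<in> Hom (X l) Z"
  shows "cmp (cmp a (p l l')) (p l' l'') = cmp a (p l l'')"
proof -
  have "cmp (cmp a (p l l')) (p l' l'') = cmp a (cmp (p l l') (p l' l''))"
    using assms
    by (intro category_assoc[OF cat, of "X l''" "X l'" "X l" Z, symmetric]
        inverse_system_ob[OF sys] inverse_system_bond_hom[OF sys])
  also have "\<dots> = cmp a (p l l'')"
    using assms by (simp add: inverse_system_bond_trans[OF sys])
  finally show ?thesis .
qed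

lemma inverse_system_equalizer_upwards:
  assumes cat: "category Ob Hom cmp idm" and sys: "inverse_system Ob Hom cmp idm L le X p"
    and "l \<in> L" "l' \<in> L" "w \<in> L" "l'' \<in> L" "le l w" "le l' w" "le w l''"
    and "Z \<in> Ob" "a \<in> Hom (X l) Z" "b \<in> Hom (X l') Z"
    and eq: "cmp a (p l w) = cmp b (p l' w)"
  shows "cmp a (p l l'') = cmp b (p l' l'')"
proof -
  have "cmp a (p l l'') = cmp (cmp a (p l w)) (p w l'')"
    using inverse_system_comp_bond[OF cat sys, of l w l'' Z a] assms(3-) by simp
  also have "\<dots> = cmp (cmp b (p l' w)) (p w l'')" using eq by simp
  also have "\<dots> = cmp b (p l' l'')"
    using inverse_system_comp_bond[OF cat sys, of l' w l'' Z b] assms(3-) by simp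
  finally show ?thesis .
qed

lemma inverse_system_square_upwards:
  assumes cat: "category Ob Hom cmp idm" and sys: "inverse_system Ob Hom cmp idm L le X p"
    and "l \<in> L" "l' \<in> L" "w \<in> L" "l'' \<in> L" "le l w" "le l' w" "le w l''"
    and "Z \<in> Ob" "Z' \<in> Ob" "g \<in> Hom Z' Z" "a \<in> Hom (X l) Z" "b \<in> Hom (X l') Z'"
    and eq: "cmp a (p l w) = cmp g (cmp b (p l' w))"
  shows "cmp a (p l l'') = cmp g (cmp b (p l' l''))"
proof -
  have X_l': "X l' \<in> Ob" using inverse_system_ob[OF sys] assms by blast
  have assoc: "cmp g (cmp b (p l' k)) = cmp (cmp g b) (p l' k)" if "k \<in> L" "le l' k" for k
    using assms that X_l'
    by (intro category_assoc[OF cat, of "X k" "X l'" Z' Z] inverse_system_ob[OF sys]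
        inverse_system_bond_hom[OF sys])
  have "cmp g b \<in> Hom (X l') Z"
    using category_comp_hom[OF cat X_l'] assms by blast
  moreover have "le l' l''" using transp_onD[OF inverse_system_transp_on[OF sys]] assms by blast
  ultimately show ?thesis
    using inverse_system_equalizer_upwards[OF cat sys, of l l' w l'' Z a "cmp g b"]
      assoc[of w] assoc[of l''] assms(3-) by simp
qed

lemma simple_J_morphism_reindexed:
  assumes cat: "category Ob Hom cmp idm"
    and sysX: "inverse_system Ob Hom cmp idm L leL X p"
    and sysY: "inverse_system Ob Hom cmp idm M leM Y q"
    and f: "\<And>u. u \<in> M \<Longrightarrow> f u \<in> L"
    and fj: "\<And>u j. u \<in> M \<Longrightarrow> j \<in> J \<Longrightarrow> fj j u \<in> Hom (X (f u)) (Y u)"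
    and F: "\<And>u. u \<in> M \<Longrightarrow> F u \<in> L"
    and f_le_F: "\<And>u. u \<in> M \<Longrightarrow> leL (f u) (F u)"
    and F_mono: "\<And>u u'. u \<in> M \<Longrightarrow> u' \<in> M \<Longrightarrow> leM u u' \<Longrightarrow> leL (F u) (F u')"
    and square: "\<And>u u'. u \<in> M \<Longrightarrow> u' \<in> M \<Longrightarrow> leM u u' \<Longrightarrow>
      \<exists>j0\<in>J. \<forall>j'\<in>J. leJ j0 j' \<longrightarrow>
        cmp (fj j' u) (p (f u) (F u')) = cmp (q u u') (cmp (fj j' u') (p (f u') (F u')))"
  defines "fj' \<equiv> \<lambda>j u. cmp (fj j u) (p (f u) (F u))"
  shows "simple_J_morphism Ob Hom cmp J leJ L leL X p M leM Y q F fj' \<and>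
    J_equiv cmp J leJ L leL p M f fj F fj'"
proof -
  note reflM = reflp_onD[OF inverse_system_reflp_on[OF sysY]]
    and reflL = reflp_onD[OF inverse_system_reflp_on[OF sysX]]
  have fj'_hom: "fj' j u \<in> Hom (X (F u)) (Y u)" if "u \<in> M" "j \<in> J" for u j
    unfolding fj'_def using that f F f_le_F fj
    by (intro category_comp_hom[OF cat, of _ "X (f u)"] inverse_system_ob[OF sysX]
        inverse_system_ob[OF sysY] inverse_system_bond_hom[OF sysX])
  have fj'_bond: "cmp (fj' j u) (p (F u) l) = cmp (fj j u) (p (f u) l)"
    if "u \<in> M" "j \<in> J" "l \<in> L" "leL (F u) l" for u j l
    unfolding fj'_def using that f F f_le_F fj inverse_system_ob[OF sysY]
    by (intro inverse_system_comp_bond[OF cat sysX])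
  have simple_square: "\<exists>j0\<in>J. \<forall>j'\<in>J. leJ j0 j' \<longrightarrow>
      cmp (fj' j' u) (p (F u) (F u')) = cmp (q u u') (cmp (fj' j' u') (p (F u') (F u')))"
    if "u \<in> M" "u' \<in> M" "leM u u'" for u u'
    using square[OF that] fj'_bond F F_mono reflL that by simp
  have "simple_J_morphism Ob Hom cmp J leJ L leL X p M leM Y q F fj'"
    unfolding simple_J_morphism_def J_morphism_def
  proof (intro conjI ballI impI)
    fix u u' assume u: "u \<in> M" "u' \<in> M" "leM u u'"
    show "\<exists>l\<in>L. leL (F u) l \<and> leL (F u') l \<and> (\<exists>j0\<in>J. \<forall>j'\<in>J. leJ j0 j' \<longrightarrow>
        cmp (fj' j' u) (p (F u) l) = cmp (q u u') (cmp (fj' j' u') (p (F u') l)))"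
      using F[OF u(2)] F_mono[OF u] reflL[OF F[OF u(2)]] simple_square[OF u] by blast
  qed (use F fj'_hom F_mono simple_square in auto)
  moreover have "J_equiv cmp J leJ L leL p M f fj F fj'"
    unfolding J_equiv_def
  proof
    fix u assume "u \<in> M"
    then obtain j0 where "j0 \<in> J" using square[of u u] reflM by blast
    then show "\<exists>l\<in>L. leL (f u) l \<and> leL (F u) l \<and> (\<exists>j0\<in>J. \<forall>j'\<in>J. leJ j0 j' \<longrightarrow>
        cmp (fj j' u) (p (f u) l) = cmp (fj' j' u) (p (F u) l))"
      using fj'_bond \<open>u \<in> M\<close> F f_le_F reflL by metis
  qed
  ultimately show ?thesis ..
qed

lemma J_morphism_square_upwards:
  assumes cat: "category Ob Hom cmp idm"
    and sysX: "inverse_system Ob Hom cmp idm L leL X p"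
    and sysY: "inverse_system Ob Hom cmp idm M leM Y q"
    and JM: "J_morphism Ob Hom cmp J leJ L leL X p M leM Y q f fj"
    and u: "u \<in> M" "u' \<in> M" "leM u u'"
    and "w \<in> L" "l \<in> L" "leL (f u) w" "leL (f u') w" "leL w l"
    and "\<exists>j0\<in>J. \<forall>j'\<in>J. leJ j0 j' \<longrightarrow>
      cmp (fj j' u) (p (f u) w) = cmp (q u u') (cmp (fj j' u') (p (f u') w))"
  shows "\<exists>j0\<in>J. \<forall>j'\<in>J. leJ j0 j' \<longrightarrow>
      cmp (fj j' u) (p (f u) l) = cmp (q u u') (cmp (fj j' u') (p (f u') l))"
proof -
  have "f u \<in> L" "f u' \<in> L"
    and "\<And>j. j \<in> J \<Longrightarrow> fj j u \<in> Hom (X (f u)) (Y u) \<and> fj j u' \<in> Hom (X (f u')) (Y u')"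
    using JM u unfolding J_morphism_def by blast+
  then show ?thesis
    using assms(5-) inverse_system_ob[OF sysY] inverse_system_bond_hom[OF sysY]
    by (blast intro: inverse_system_square_upwards[OF cat sysX, where w = w and
          Z = "Y u" and Z' = "Y u'"])
qed

theorem lemma6:
  fixes Ob :: "'o set" and Hom :: "'o \<Rightarrow> 'o \<Rightarrow> 'm set"
    and cmp :: "'m \<Rightarrow> 'm \<Rightarrow> 'm" and idm :: "'o \<Rightarrow> 'm"
    and J :: "'j set" and leJ :: "'j \<Rightarrow> 'j \<Rightarrow> bool"
    and L :: "'l set" and leL :: "'l \<Rightarrow> 'l \<Rightarrow> bool" and X :: "'l \<Rightarrow> 'o" and p :: "'l \<Rightarrow> 'l \<Rightarrow> 'm"
    and M :: "'u set" and leM :: "'u \<Rightarrow> 'u \<Rightarrow> bool" and Y :: "'u \<Rightarrow> 'o" and q :: "'u \<Rightarrow> 'u \<Rightarrow> 'm"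
    and f :: "'u \<Rightarrow> 'l" and fj :: "'j \<Rightarrow> 'u \<Rightarrow> 'm"
  assumes "category Ob Hom cmp idm"
    and "directed_poset J leJ"
    and "inverse_system Ob Hom cmp idm L leL X p"
    and "inverse_system Ob Hom cmp idm M leM Y q"
    and "cofinite_set M leM"
    and "J_morphism Ob Hom cmp J leJ L leL X p M leM Y q f fj"
  shows "\<exists>f' fj'. simple_J_morphism Ob Hom cmp J leJ L leL X p M leM Y q f' fj' \<and>
                 J_equiv cmp J leJ L leL p M f fj f' fj'"
proof -
  note cat = assms(1) and sysX = assms(3) and sysY = assms(4)
  have f: "\<And>u. u \<in> M \<Longrightarrow> f u \<in> L"
    and fj: "\<And>u j. u \<in> M \<Longrightarrow> j \<in> J \<Longrightarrow> fj j u \<in> Hom (X (f u)) (Y u)"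
    using assms(6) unfolding J_morphism_def by blast+
  obtain w where w: "\<And>u u'. u \<in> M \<Longrightarrow> u' \<in> M \<Longrightarrow> leM u u' \<Longrightarrow>
      w u u' \<in> L \<and> leL (f u) (w u u') \<and> leL (f u') (w u u') \<and>
      (\<exists>j0\<in>J. \<forall>j'\<in>J. leJ j0 j' \<longrightarrow>
        cmp (fj j' u) (p (f u) (w u u')) = cmp (q u u') (cmp (fj j' u') (p (f u') (w u u'))))"
    using assms(6) unfolding J_morphism_def by metis
  define h where "h u = insert (f u) ((\<lambda>k. w k u) ` {k \<in> M. leM k u})" for u
  have h_finite: "finite (h u) \<and> h u \<noteq> {} \<and> h u \<subseteq> L" if "u \<in> M" for u
    using assms(5) that f w unfolding h_def cofinite_set_def by auto
  obtain F where F: "\<And>u. u \<in> M \<Longrightarrow> F u \<in> L"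
    and F_above: "\<And>u l. u \<in> M \<Longrightarrow> l \<in> h u \<Longrightarrow> leL l (F u)"
    and F_mono: "\<And>u u'. u \<in> M \<Longrightarrow> u' \<in> M \<Longrightarrow> leM u u' \<Longrightarrow> leL (F u) (F u')"
    using monotone_map_above_finite_sets[where h = h, OF inverse_system_reflp_on[OF sysY]
        inverse_system_transp_on[OF sysY] assms(5) inverse_system_directed[OF sysX] h_finite]
    by blast
  have f_le_F: "\<And>u. u \<in> M \<Longrightarrow> leL (f u) (F u)"
    using F_above unfolding h_def by blast
  have square: "\<exists>j0\<in>J. \<forall>j'\<in>J. leJ j0 j' \<longrightarrow>
      cmp (fj j' u) (p (f u) (F u')) = cmp (q u u') (cmp (fj j' u') (p (f u') (F u')))"
    if u: "u \<in> M" "u' \<in> M" "leM u u'" for u u'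
    using J_morphism_square_upwards[OF cat sysX sysY assms(6) u, of "w u u'" "F u'"]
      w[OF u] F[OF u(2)] F_above[of u' "w u u'"] u unfolding h_def by blast
  show ?thesis
    using simple_J_morphism_reindexed[OF cat sysX sysY f fj F f_le_F F_mono square] by blast
qed

end
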